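(* Let $(\boldsymbol{\omega}^*,\boldsymbol{P}_{\mathrm M}^{\mathrm r*},\boldsymbol{P}_{\mathrm L}^{\mathrm r*},\boldsymbol{P}^*,\boldsymbol{\psi}^* )$ be an optimal solution of problem (OFC-mod). Then $\boldsymbol{\omega}^*=\boldsymbol{0}$, and $(\boldsymbol{P}_{\mathrm M}^{\mathrm r*},\boldsymbol{P}_{\mathrm L}^{\mathrm r*},\boldsymbol{\theta}^* )$ with $\theta_i^*=\psi_i^*-\psi^*_{\mathrm{ref}}$ for all $i\in\mathcal N$ is an optimal solution of problem (OFC).
   Context: Power network: a set of buses $\mathcal N=\{1,\dots,|\mathcal N|\}$ and a set of lines $\mathcal E\subset\mathcal N\times\mathcal N$ (ordered pairs $ij$). $\mathcal N$ is partitioned into disjoint sets $\mathcal N_{\mathrm M}$ (grid-forming buses) and $\mathcal N_{\mathrm L}$ (grid-following buses), and a reference bus $\mathrm{ref}\in\mathcal N$ is fixed. Given data: droop coefficients $k_i^{\mathrm M}>0$ ($i\in\mathcal N_{\mathrm M}$), $k_i^{\mathrm L}>0$ ($i\in\mathcal N_{\mathrm L}$); line parameters $B_{ij}$ ($ij\in\mathcal E$); net demands $P_i^{\mathrm d}\in\mathbb R$ ($i\in\mathcal N$); bounds $\underline P^{\mathrm r}_{\mathrm M,i}\le\overline P^{\mathrm r}_{\mathrm M,i}$, $\underline P^{\mathrm r}_{\mathrm L,i}\le\overline P^{\mathrm r}_{\mathrm L,i}$, $\underline P_{ij}\le\overline P_{ij}$; cost functions $c_i^{\mathrm M},c_i^{\mathrm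 L}:\mathbb R\to\mathbb R$. Problem (OFC), in variables $P^{\mathrm r}_{\mathrm M,i}$ ($i\in\mathcal N_{\mathrm M}$), $P^{\mathrm r}_{\mathrm L,i}$ ($i\in\mathcal N_{\mathrm L}$), $\theta_i$ ($i\in\mathcal N$): minimize $\sum_{i\in\mathcal N_{\mathrm M}}c_i^{\mathrm M}(P^{\mathrm r}_{\mathrm M,i})+\sum_{i\in\mathcal N_{\mathrm L}}c_i^{\mathrm L}(P^{\mathrm r}_{\mathrm L,i})$ subject to $P^{\mathrm r}_{\mathrm M,i}=P_i^{\mathrm d}+\sum_{j:ij\in\mathcal E}B_{ij}(\theta_i-\theta_j)$ ($i\in\mathcal N_{\mathrm M}$); $P^{\mathrm r}_{\mathrm L,i}=P_i^{\mathrm d}+\sum_{j:ij\in\mathcal E}B_{ij}(\theta_i-\theta_j)$ ($i\in\mathcal N_{\mathrm L}$); $\underline P^{\mathrm r}_{\mathrm M,i}\le P^{\mathrm r}_{\mathrm M,i}\le\overline P^{\mathrm r}_{\mathrm M,i}$; $\underline P^{\mathrm r}_{\mathrm L,i}\le P^{\mathrm r}_{\mathrm L,i}\le\overline P^{\mathrm r}_{\mathrm L,i}$; $\underline P_{ij}\le B_{ij}(\theta_i-\theta_j)\le\overline P_{ij}$ ($ij\in\mathcal E$); $\theta_{\mathrm{ref}}=0$. Problem (OFC-mod), in variables $\boldsymbol\omega=(\omega_i)_{i\in\mathcal N}$, $\boldsymbol P^{\mathrm r}_{\mathrm M}=(P^{\mathrm r}_{\mathrm M,i})_{i\in\mathcal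 N_{\mathrm M}}$, $\boldsymbol P^{\mathrm r}_{\mathrm L}=(P^{\mathrm r}_{\mathrm L,i})_{i\in\mathcal N_{\mathrm L}}$, $\boldsymbol P=(P_{ij})_{ij\in\mathcal E}$, $\boldsymbol\psi=(\psi_i)_{i\in\mathcal N}$: minimize $\sum_{i\in\mathcal N_{\mathrm M}}c_i^{\mathrm M}(P^{\mathrm r}_{\mathrm M,i})+\sum_{i\in\mathcal N_{\mathrm L}}c_i^{\mathrm L}(P^{\mathrm r}_{\mathrm L,i})+\tfrac12\sum_{i\in\mathcal N_{\mathrm M}}k_i^{\mathrm M}\omega_i^2+\tfrac12\sum_{i\in\mathcal N_{\mathrm L}}k_i^{\mathrm L}\omega_i^2$ subject to (a) $P^{\mathrm r}_{\mathrm M,i}=k_i^{\mathrm M}\omega_i+P_i^{\mathrm d}+\sum_{j:ij\in\mathcal E}P_{ij}$, $i\in\mathcal N_{\mathrm M}$; (b) $P^{\mathrm r}_{\mathrm L,i}=k_i^{\mathrm L}\omega_i+P_i^{\mathrm d}+\sum_{j:ij\in\mathcal E}P_{ij}$, $i\in\mathcal N_{\mathrm L}$; (c) $P^{\mathrm r}_{\mathrm M,i}=P_i^{\mathrm d}+\sum_{j:ij\in\mathcal E}B_{ij}(\psi_i-\psi_j)$, $i\in\mathcal N_{\mathrm M}$; (d) $P^{\mathrm r}_{\mathrm L,i}=P_i^{\mathrm d}+\sum_{j:ij\in\mathcal E}B_{ij}(\psi_i-\psi_j)$, $i\in\mathcal N_{\mathrm L}$; (e) $\underline P^{\mathrm r}_{\mathrm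 M,i}\le P^{\mathrm r}_{\mathrm M,i}\le\overline P^{\mathrm r}_{\mathrm M,i}$, $i\in\mathcal N_{\mathrm M}$; (f) $\underline P^{\mathrm r}_{\mathrm L,i}\le P^{\mathrm r}_{\mathrm L,i}\le\overline P^{\mathrm r}_{\mathrm L,i}$, $i\in\mathcal N_{\mathrm L}$; (g) $\underline P_{ij}\le B_{ij}(\psi_i-\psi_j)\le\overline P_{ij}$, $ij\in\mathcal E$. *)

theory Defs
  imports Main Complex_Main
begin

text \<open>Vectors indexed by buses / lines are functions; only their values on N / E matter.\<close>

definition out_nbrs :: "('n \<times> 'n) set \<Rightarrow> 'n \<Rightarrow> 'n set" where
  "out_nbrs E i = {j. (i, j) \<in> E}"

definition dc_flow :: "('n \<times> 'n) set \<Rightarrow> ('n \<times> 'n \<Rightarrow> real) \<Rightarrow> ('n \<Rightarrow> real) \<Rightarrow> 'n \<Rightarrow> real" where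
  "dc_flow E B x i = (\<Sum>j\<in>out_nbrs E i. B (i, j) * (x i - x j))"

definition line_sum :: "('n \<times> 'n) set \<Rightarrow> ('n \<times> 'n \<Rightarrow> real) \<Rightarrow> 'n \<Rightarrow> real" where
  "line_sum E P i = (\<Sum>j\<in>out_nbrs E i. P (i, j))"

definition gen_cost :: "'n set \<Rightarrow> 'n set \<Rightarrow> ('n \<Rightarrow> real \<Rightarrow> real) \<Rightarrow> ('n \<Rightarrow> real \<Rightarrow> real)
    \<Rightarrow> ('n \<Rightarrow> real) \<Rightarrow> ('n \<Rightarrow> real) \<Rightarrow> real" where
  "gen_cost NM NL cM cL PM PL = (\<Sum>i\<in>NM. cM i (PM i)) + (\<Sum>i\<in>NL. cL i (PL i))"

definition ofc_feasible ::
  "'n set \<Rightarrow> 'n set \<Rightarrow> ('n \<times> 'n) set \<Rightarrow> 'n \<Rightarrow> ('n \<times> 'n \<Rightarrow> real) \<Rightarrow> ('n \<Rightarrow> real)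
   \<Rightarrow> ('n \<Rightarrow> real) \<Rightarrow> ('n \<Rightarrow> real) \<Rightarrow> ('n \<Rightarrow> real) \<Rightarrow> ('n \<Rightarrow> real)
   \<Rightarrow> ('n \<times> 'n \<Rightarrow> real) \<Rightarrow> ('n \<times> 'n \<Rightarrow> real)
   \<Rightarrow> ('n \<Rightarrow> real) \<Rightarrow> ('n \<Rightarrow> real) \<Rightarrow> ('n \<Rightarrow> real) \<Rightarrow> bool" where
  "ofc_feasible NM NL E ref B Pd PMlo PMhi PLlo PLhi Plo Phi PM PL \<theta> \<longleftrightarrow>
     (\<forall>i\<in>NM. PM i = Pd i + dc_flow E B \<theta> i) \<and>
     (\<forall>i\<in>NL. PL i = Pd i + dc_flow E B \<theta> i) \<and>
     (\<forall>i\<in>NM. PMlo i \<le> PM i \<and> PM i \<le> PMhi i) \<and>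
     (\<forall>i\<in>NL. PLlo i \<le> PL i \<and> PL i \<le> PLhi i) \<and>
     (\<forall>(i, j)\<in>E. Plo (i, j) \<le> B (i, j) * (\<theta> i - \<theta> j) \<and> B (i, j) * (\<theta> i - \<theta> j) \<le> Phi (i, j)) \<and>
     \<theta> ref = 0"

definition ofc_optimal ::
  "'n set \<Rightarrow> 'n set \<Rightarrow> ('n \<times> 'n) set \<Rightarrow> 'n \<Rightarrow> ('n \<times> 'n \<Rightarrow> real) \<Rightarrow> ('n \<Rightarrow> real)
   \<Rightarrow> ('n \<Rightarrow> real) \<Rightarrow> ('n \<Rightarrow> real) \<Rightarrow> ('n \<Rightarrow> real) \<Rightarrow> ('n \<Rightarrow> real)
   \<Rightarrow> ('n \<times> 'n \<Rightarrow> real) \<Rightarrow> ('n \<times> 'n \<Rightarrow> real)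
   \<Rightarrow> ('n \<Rightarrow> real \<Rightarrow> real) \<Rightarrow> ('n \<Rightarrow> real \<Rightarrow> real)
   \<Rightarrow> ('n \<Rightarrow> real) \<Rightarrow> ('n \<Rightarrow> real) \<Rightarrow> ('n \<Rightarrow> real) \<Rightarrow> bool" where
  "ofc_optimal NM NL E ref B Pd PMlo PMhi PLlo PLhi Plo Phi cM cL PM PL \<theta> \<longleftrightarrow>
     ofc_feasible NM NL E ref B Pd PMlo PMhi PLlo PLhi Plo Phi PM PL \<theta> \<and>
     (\<forall>PM' PL' \<theta>'. ofc_feasible NM NL E ref B Pd PMlo PMhi PLlo PLhi Plo Phi PM' PL' \<theta>' \<longrightarrow>
        gen_cost NM NL cM cL PM PL \<le> gen_cost NM NL cM cL PM' PL')"

definition ofcmod_feasible ::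
  "'n set \<Rightarrow> 'n set \<Rightarrow> ('n \<times> 'n) set \<Rightarrow> ('n \<Rightarrow> real) \<Rightarrow> ('n \<Rightarrow> real) \<Rightarrow> ('n \<times> 'n \<Rightarrow> real)
   \<Rightarrow> ('n \<Rightarrow> real)
   \<Rightarrow> ('n \<Rightarrow> real) \<Rightarrow> ('n \<Rightarrow> real) \<Rightarrow> ('n \<Rightarrow> real) \<Rightarrow> ('n \<Rightarrow> real)
   \<Rightarrow> ('n \<times> 'n \<Rightarrow> real) \<Rightarrow> ('n \<times> 'n \<Rightarrow> real)
   \<Rightarrow> ('n \<Rightarrow> real) \<Rightarrow> ('n \<Rightarrow> real) \<Rightarrow> ('n \<Rightarrow> real) \<Rightarrow> ('n \<times> 'n \<Rightarrow> real) \<Rightarrow> ('n \<Rightarrow> real) \<Rightarrow> bool" where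
  "ofcmod_feasible NM NL E kM kL B Pd PMlo PMhi PLlo PLhi Plo Phi \<omega> PM PL P \<psi> \<longleftrightarrow>
     (\<forall>i\<in>NM. PM i = kM i * \<omega> i + Pd i + line_sum E P i) \<and>
     (\<forall>i\<in>NL. PL i = kL i * \<omega> i + Pd i + line_sum E P i) \<and>
     (\<forall>i\<in>NM. PM i = Pd i + dc_flow E B \<psi> i) \<and>
     (\<forall>i\<in>NL. PL i = Pd i + dc_flow E B \<psi> i) \<and>
     (\<forall>i\<in>NM. PMlo i \<le> PM i \<and> PM i \<le> PMhi i) \<and>
     (\<forall>i\<in>NL. PLlo i \<le> PL i \<and> PL i \<le> PLhi i) \<and>
     (\<forall>(i, j)\<in>E. Plo (i, j) \<le> B (i, j) * (\<psi> i - \<psi> j) \<and> B (i, j) * (\<psi> i - \<psi> j) \<le> Phi (i, j))"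

definition ofcmod_cost :: "'n set \<Rightarrow> 'n set \<Rightarrow> ('n \<Rightarrow> real) \<Rightarrow> ('n \<Rightarrow> real)
    \<Rightarrow> ('n \<Rightarrow> real \<Rightarrow> real) \<Rightarrow> ('n \<Rightarrow> real \<Rightarrow> real)
    \<Rightarrow> ('n \<Rightarrow> real) \<Rightarrow> ('n \<Rightarrow> real) \<Rightarrow> ('n \<Rightarrow> real) \<Rightarrow> real" where
  "ofcmod_cost NM NL kM kL cM cL \<omega> PM PL =
     gen_cost NM NL cM cL PM PL
     + (1/2) * (\<Sum>i\<in>NM. kM i * (\<omega> i)\<^sup>2) + (1/2) * (\<Sum>i\<in>NL. kL i * (\<omega> i)\<^sup>2)"

definition ofcmod_optimal ::
  "'n set \<Rightarrow> 'n set \<Rightarrow> ('n \<times> 'n) set \<Rightarrow> ('n \<Rightarrow> real) \<Rightarrow> ('n \<Rightarrow> real) \<Rightarrow> ('n \<times> 'n \<Rightarrow> real)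
   \<Rightarrow> ('n \<Rightarrow> real)
   \<Rightarrow> ('n \<Rightarrow> real) \<Rightarrow> ('n \<Rightarrow> real) \<Rightarrow> ('n \<Rightarrow> real) \<Rightarrow> ('n \<Rightarrow> real)
   \<Rightarrow> ('n \<times> 'n \<Rightarrow> real) \<Rightarrow> ('n \<times> 'n \<Rightarrow> real)
   \<Rightarrow> ('n \<Rightarrow> real \<Rightarrow> real) \<Rightarrow> ('n \<Rightarrow> real \<Rightarrow> real)
   \<Rightarrow> ('n \<Rightarrow> real) \<Rightarrow> ('n \<Rightarrow> real) \<Rightarrow> ('n \<Rightarrow> real) \<Rightarrow> ('n \<times> 'n \<Rightarrow> real) \<Rightarrow> ('n \<Rightarrow> real) \<Rightarrow> bool" where
  "ofcmod_optimal NM NL E kM kL B Pd PMlo PMhi PLlo PLhi Plo Phi cM cL \<omega> PM PL P \<psi> \<longleftrightarrow>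
     ofcmod_feasible NM NL E kM kL B Pd PMlo PMhi PLlo PLhi Plo Phi \<omega> PM PL P \<psi> \<and>
     (\<forall>\<omega>' PM' PL' P' \<psi>'.
        ofcmod_feasible NM NL E kM kL B Pd PMlo PMhi PLlo PLhi Plo Phi \<omega>' PM' PL' P' \<psi>' \<longrightarrow>
        ofcmod_cost NM NL kM kL cM cL \<omega> PM PL \<le> ofcmod_cost NM NL kM kL cM cL \<omega>' PM' PL')"

end

theory Submission
  imports Defs
begin

text \<open>Every feasible point of (OFC) lifts to a feasible point of (OFC-mod) with zero
  frequency and line flows \<open>B\<^sub>i\<^sub>j (\<theta>\<^sub>i - \<theta>\<^sub>j)\<close>, at which the two objectives agree. An optimum
  of (OFC-mod) therefore has a frequency penalty of at most zero; as the droop coefficients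
  are positive this forces \<open>\<omega> = 0\<close>, and then its cost is a lower bound for (OFC). Conversely,
  constraints (c)--(g) of (OFC-mod) are those of (OFC) except \<open>\<theta>\<^sub>r\<^sub>e\<^sub>f = 0\<close>, which the shift
  \<open>\<theta> = \<psi> - \<psi>\<^sub>r\<^sub>e\<^sub>f\<close> achieves without changing any angle difference.\<close>

lemma dc_flow_shift: "dc_flow E B (\<lambda>i. x i - c) i = dc_flow E B x i"
  unfolding dc_flow_def by simp

lemma line_sum_dc_flow: "line_sum E (\<lambda>(i, j). B (i, j) * (x i - x j)) i = dc_flow E B x i"
  unfolding line_sum_def dc_flow_def by simp

lemma sum_weighted_squares_eq_0_iff:
  fixes k x :: "'a \<Rightarrow> real"
  assumes "finite A" and "\<forall>i\<in>A. k i > 0"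
  shows "(\<Sum>i\<in>A. k i * (x i)\<^sup>2) = 0 \<longleftrightarrow> (\<forall>i\<in>A. x i = 0)"
  using assms by (force simp add: sum_nonneg_eq_0_iff less_imp_le)

lemma sum_weighted_squares_nonneg:
  fixes k x :: "'a \<Rightarrow> real"
  assumes "\<forall>i\<in>A. k i > 0"
  shows "0 \<le> (\<Sum>i\<in>A. k i * (x i)\<^sup>2)"
  using assms by (simp add: sum_nonneg less_imp_le)

lemma ofcmod_cost_zero_freq:
  "ofcmod_cost NM NL kM kL cM cL (\<lambda>_. 0) PM PL = gen_cost NM NL cM cL PM PL"
  unfolding ofcmod_cost_def by simp

lemma ofcmod_feasible_of_ofc_feasible:
  assumes "ofc_feasible NM NL E ref B Pd PMlo PMhi PLlo PLhi Plo Phi PM PL \<theta>"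
  shows "ofcmod_feasible NM NL E kM kL B Pd PMlo PMhi PLlo PLhi Plo Phi (\<lambda>_. 0) PM PL
           (\<lambda>(i, j). B (i, j) * (\<theta> i - \<theta> j)) \<theta>"
  using assms unfolding ofc_feasible_def ofcmod_feasible_def line_sum_dc_flow by auto

lemma ofc_feasible_of_ofcmod_feasible:
  assumes "ofcmod_feasible NM NL E kM kL B Pd PMlo PMhi PLlo PLhi Plo Phi \<omega> PM PL P \<psi>"
  shows "ofc_feasible NM NL E ref B Pd PMlo PMhi PLlo PLhi Plo Phi PM PL (\<lambda>i. \<psi> i - \<psi> ref)"
  using assms unfolding ofc_feasible_def ofcmod_feasible_def dc_flow_shift by auto

theorem lemma1:
  fixes N NM NL :: "'n set" and E :: "('n \<times> 'n) set" and ref :: 'n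
    and kM kL Pd PMlo PMhi PLlo PLhi :: "'n \<Rightarrow> real"
    and B Plo Phi :: "'n \<times> 'n \<Rightarrow> real"
    and cM cL :: "'n \<Rightarrow> real \<Rightarrow> real"
    and \<omega> PM PL \<psi> :: "'n \<Rightarrow> real" and P :: "'n \<times> 'n \<Rightarrow> real"
  assumes "finite N" and "NM \<inter> NL = {}" and "NM \<union> NL = N"
    and "E \<subseteq> N \<times> N" and "ref \<in> N"
    and "\<forall>i\<in>NM. kM i > 0" and "\<forall>i\<in>NL. kL i > 0"
    and "\<forall>i\<in>NM. PMlo i \<le> PMhi i" and "\<forall>i\<in>NL. PLlo i \<le> PLhi i"
    and "\<forall>e\<in>E. Plo e \<le> Phi e"
    and "ofcmod_optimal NM NL E kM kL B Pd PMlo PMhi PLlo PLhi Plo Phi cM cL \<omega> PM PL P \<psi>"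
  shows "(\<forall>i\<in>N. \<omega> i = 0) \<and>
         ofc_optimal NM NL E ref B Pd PMlo PMhi PLlo PLhi Plo Phi cM cL PM PL (\<lambda>i. \<psi> i - \<psi> ref)"
proof -
  let ?cost = "ofcmod_cost NM NL kM kL cM cL \<omega> PM PL"
  let ?SM = "\<Sum>i\<in>NM. kM i * (\<omega> i)\<^sup>2" and ?SL = "\<Sum>i\<in>NL. kL i * (\<omega> i)\<^sup>2"
  have feasible: "ofcmod_feasible NM NL E kM kL B Pd PMlo PMhi PLlo PLhi Plo Phi \<omega> PM PL P \<psi>"
    using assms(11) unfolding ofcmod_optimal_def by blast
  have cost_le_ofc: "?cost \<le> gen_cost NM NL cM cL PM' PL'"
    if "ofc_feasible NM NL E ref B Pd PMlo PMhi PLlo PLhi Plo Phi PM' PL' \<theta>'" for PM' PL' \<theta>'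
  proof -
    have "?cost \<le> ofcmod_cost NM NL kM kL cM cL (\<lambda>_. 0) PM' PL'"
      using assms(11) ofcmod_feasible_of_ofc_feasible[OF that, of kM kL]
      unfolding ofcmod_optimal_def by blast
    then show ?thesis by (simp only: ofcmod_cost_zero_freq)
  qed
  have ofc_feasible: "ofc_feasible NM NL E ref B Pd PMlo PMhi PLlo PLhi Plo Phi PM PL (\<lambda>i. \<psi> i - \<psi> ref)"
    using ofc_feasible_of_ofcmod_feasible[OF feasible] .
  have "?SM / 2 + ?SL / 2 \<le> 0"
    using cost_le_ofc[OF ofc_feasible] unfolding ofcmod_cost_def by simp
  moreover have "0 \<le> ?SM" "0 \<le> ?SL"
    using assms(6,7) by (simp_all add: sum_weighted_squares_nonneg)
  ultimately have "?SM = 0" "?SL = 0" by linarith+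
  moreover have "finite NM" "finite NL" using assms(1,3) by (auto intro: finite_subset)
  ultimately have "\<forall>i\<in>NM. \<omega> i = 0" "\<forall>i\<in>NL. \<omega> i = 0"
    using assms(6,7) sum_weighted_squares_eq_0_iff by blast+
  hence "\<forall>i\<in>N. \<omega> i = 0" using assms(3) by blast
  moreover have "?cost = gen_cost NM NL cM cL PM PL"
    using \<open>?SM = 0\<close> \<open>?SL = 0\<close> unfolding ofcmod_cost_def by simp
  ultimately show ?thesis
    using ofc_feasible cost_le_ofc unfolding ofc_optimal_def by auto
qed

end
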